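(* Let $\sigma$ be a 2-structure and $X\subsetneq V(\sigma)$ with $\sigma[X]$ prime; write $\overline{X}=V(\sigma)\setminus X$. Suppose Statement (S3) holds (there is no $Y\subseteq\overline{X}$ with $|Y|=3$ and $\sigma[X\cup Y]$ prime). If $\sigma$ is prime, then: (1) Let $e\in E(\sigma)$. If $|\langle X\rangle^{(e,e)}_\sigma|\geq 2$, then $\sigma[\langle X\rangle_\sigma]$ is constant and $E(\sigma[\langle X\rangle_\sigma])=\{e[\langle X\rangle_\sigma]\}$. Similarly, for $\alpha\in X$, if $|X^{(e,e)}_\sigma(\alpha)|\geq 2$, then $\sigma[X_\sigma(\alpha)]$ is constant and $E(\sigma[X_\sigma(\alpha)])=\{e[X_\sigma(\alpha)]\}$. (2) Let $e,f\in E(\sigma)$ be distinct. If $|\langle X\rangle^{(e,f)}_\sigma|\geq 2$, then $\sigma[\langle X\rangle_\sigma]$ is linear and $E(\sigma[\langle X\rangle_\sigma])=\{e[\langle X\rangle_\sigma],f[\langle X\rangle_\sigma]\}$. Similarly, for $\alpha\in X$, if $|X^{(e,f)}_\sigma(\alpha)|\geq 2$, then $\sigma[X_\sigma(\alpha)]$ is linear and $E(\sigma[X_\sigma(\alpha)])=\{e[X_\sigma(\alpha)],f[X_\sigma(\alpha)]\}$.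
   Context: A 2-structure $\sigma$ consists of a vertex set $V(\sigma)$ and an equivalence relation $\equiv_\sigma$ on ordered pairs of distinct vertices; $E(\sigma)$ is its set of classes; $(v,w)_\sigma$ is the class of $(v,w)$ and $[v,w]_\sigma=((v,w)_\sigma,(w,v)_\sigma)$; $\sigma[W]$ is the induced 2-structure on $W$. For $e\in E(\sigma)$ and $W\subseteq V(\sigma)$, $e[W]=e\cap(W\times W)$. A module is a set $M$ such that for all $x,y\in M$ and $v\notin M$, $(x,v)\equiv_\sigma(y,v)$ and $(v,x)\equiv_\sigma(v,y)$; $\sigma$ is prime if $|V(\sigma)|\geq3$ and its only modules are $\emptyset$, $V(\sigma)$ and singletons. A 2-structure $\tau$ is constant if $|E(\tau)|=1$; $\tau$ is linear if there exist distinct $e,f\in E(\tau)$ such that the relation $\{(v,w): v\neq w,\ [v,w]_\tau=(e,f)\}$ is a (strict) linear order on $V(\tau)$. Given $\sigma[X]$ prime: $\langle X\rangle_\sigma=\{v\in\overline{X}: X\text{ is a module of }\sigma[X\cup\{v\}]\}$; for $\alpha\in X$, $X_\sigma(\alpha)=\{v\in\overline{X}:\{\alpha,v\}\text{ is a module of }\sigma[X\cup\{v\}]\}$. For $e,f\in E(\sigma)$: $\langle X\rangle^{(e,f)}_\sigma=\{v\in\langle X\rangle_\sigma:(v,\beta)\in e,(\beta,v)\in f\}$ for any $\beta\in X$; $X^{(e,f)}_\sigma(\alpha)=\{v\in X_\sigma(\alpha):(v,\alpha)\in e,(\alpha,v)\in f\}$. *)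

theory Defs
  imports Main
begin

text \<open>A 2-structure is a pair (V, R): a vertex set V and an equivalence relation R
  on the set of ordered pairs of distinct vertices of V.\<close>

type_synonym 'a twostr = "'a set \<times> (('a \<times> 'a) \<times> ('a \<times> 'a)) set"

definition dpairs :: "'a set \<Rightarrow> ('a \<times> 'a) set" where
  "dpairs V = {(v, w). v \<in> V \<and> w \<in> V \<and> v \<noteq> w}"

definition Vs :: "'a twostr \<Rightarrow> 'a set" where "Vs s = fst s"
definition Rel :: "'a twostr \<Rightarrow> (('a \<times> 'a) \<times> ('a \<times> 'a)) set" where "Rel s = snd s"

definition is_2structure :: "'a twostr \<Rightarrow> bool" where
  "is_2structure s \<longleftrightarrow> equiv (dpairs (Vs s)) (Rel s)"

definition Es :: "'a twostr \<Rightarrow> ('a \<times> 'a) set set" where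
  "Es s = dpairs (Vs s) // Rel s"

definition induced :: "'a twostr \<Rightarrow> 'a set \<Rightarrow> 'a twostr" where
  "induced s W = (W, Rel s \<inter> (dpairs W \<times> dpairs W))"

definition restr :: "('a \<times> 'a) set \<Rightarrow> 'a set \<Rightarrow> ('a \<times> 'a) set" where
  "restr e W = e \<inter> (W \<times> W)"

definition module :: "'a twostr \<Rightarrow> 'a set \<Rightarrow> bool" where
  "module s M \<longleftrightarrow> M \<subseteq> Vs s \<and>
     (\<forall>x\<in>M. \<forall>y\<in>M. \<forall>v\<in>Vs s - M.
        ((x, v), (y, v)) \<in> Rel s \<and> ((v, x), (v, y)) \<in> Rel s)"

text \<open>|A| \<ge> n, for possibly infinite A.\<close>
definition card_ge :: "nat \<Rightarrow> 'a set \<Rightarrow> bool" where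
  "card_ge n A \<longleftrightarrow> (\<exists>B\<subseteq>A. finite B \<and> card B = n)"

definition prime2 :: "'a twostr \<Rightarrow> bool" where
  "prime2 s \<longleftrightarrow> card_ge 3 (Vs s) \<and>
     (\<forall>M. module s M \<longrightarrow> M = {} \<or> M = Vs s \<or> (\<exists>x. M = {x}))"

definition constant2 :: "'a twostr \<Rightarrow> bool" where
  "constant2 t \<longleftrightarrow> card (Es t) = 1"

definition linear2 :: "'a twostr \<Rightarrow> bool" where
  "linear2 t \<longleftrightarrow> (\<exists>e\<in>Es t. \<exists>f\<in>Es t. e \<noteq> f \<and>
     strict_linear_order_on (Vs t)
       {(v, w). v \<in> Vs t \<and> w \<in> Vs t \<and> v \<noteq> w \<and> (v, w) \<in> e \<and> (w, v) \<in> f})"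

definition ext_set :: "'a twostr \<Rightarrow> 'a set \<Rightarrow> 'a set" where
  "ext_set s X = {v \<in> Vs s - X. module (induced s (X \<union> {v})) X}"

definition alpha_set :: "'a twostr \<Rightarrow> 'a set \<Rightarrow> 'a \<Rightarrow> 'a set" where
  "alpha_set s X \<alpha> = {v \<in> Vs s - X. module (induced s (X \<union> {v})) {\<alpha>, v}}"

text \<open>\<langle>X\<rangle>^(e,f)_s (the choice of \<beta> \<in> X is immaterial).\<close>
definition ext_set_ef :: "'a twostr \<Rightarrow> 'a set \<Rightarrow> ('a \<times> 'a) set \<Rightarrow> ('a \<times> 'a) set \<Rightarrow> 'a set" where
  "ext_set_ef s X e f = {v \<in> ext_set s X. \<forall>\<beta>\<in>X. (v, \<beta>) \<in> e \<and> (\<beta>, v) \<in> f}"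

definition alpha_set_ef :: "'a twostr \<Rightarrow> 'a set \<Rightarrow> 'a \<Rightarrow> ('a \<times> 'a) set \<Rightarrow> ('a \<times> 'a) set \<Rightarrow> 'a set" where
  "alpha_set_ef s X \<alpha> e f = {v \<in> alpha_set s X \<alpha>. (v, \<alpha>) \<in> e \<and> (\<alpha>, v) \<in> f}"

end

theory Submission
  imports Defs
begin

(*
  Let D be \<langle>X\<rangle> or X(\<alpha>), with reference vertex c \<in> X (any vertex for \<langle>X\<rangle>, \<alpha> itself
  for X(\<alpha>)). Call z \<notin> X \<union> D a witness of u \<in> D if \<sigma>[X \<union> {u, z}] is prime. Every u has a
  witness: otherwise the vertices of D without witnesses would give a nontrivial module of \<sigma>.
  By (S3), adding a third vertex y \<in> D to X \<union> {u, z} destroys primality, and the module that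
  appears shows that either y does not distinguish u from c (and then z is no witness of y), or
  neither c nor z distinguishes y from u. Consequently, for distinct y, u \<in> D one has
  [y, u] = [y, c] or [u, y] = [u, c]; and when c does not distinguish y from u, their witness
  sets differ (else they would span a nontrivial module) and are strictly nested. So every pair
  of D carries the classes (e, f) or (f, e) of [v, c] for one fixed v \<in> D, which is the constant
  case when e = f. For e \<noteq> f, a directed 3-cycle of the induced order cannot cross between
  {v. (v, c) \<in> e} and {v. (v, c) \<in> f}, and inside one of them it would yield a strictly
  increasing cycle of witness sets; hence the order is transitive and \<sigma>[D] is linear.
*)

section \<open>Modules and primality relative to a vertex set\<close>

definition undist :: "(('a \<times> 'a) \<times> ('a \<times> 'a)) set \<Rightarrow> 'a \<Rightarrow> 'a \<Rightarrow> 'a \<Rightarrow> bool" where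
  "undist R z x y \<longleftrightarrow> ((x, z), (y, z)) \<in> R \<and> ((z, x), (z, y)) \<in> R"

definition module_in :: "(('a \<times> 'a) \<times> ('a \<times> 'a)) set \<Rightarrow> 'a set \<Rightarrow> 'a set \<Rightarrow> bool" where
  "module_in R W M \<longleftrightarrow> M \<subseteq> W \<and> (\<forall>x\<in>M. \<forall>y\<in>M. \<forall>v\<in>W - M. undist R v x y)"

definition prime_in :: "(('a \<times> 'a) \<times> ('a \<times> 'a)) set \<Rightarrow> 'a set \<Rightarrow> bool" where
  "prime_in R W \<longleftrightarrow> card_ge 3 W \<and> (\<forall>M. module_in R W M \<longrightarrow> M = {} \<or> M = W \<or> (\<exists>x. M = {x}))"

lemma module_inD: "module_in R W M \<Longrightarrow> x \<in> M \<Longrightarrow> y \<in> M \<Longrightarrow> v \<in> W \<Longrightarrow> v \<notin> M \<Longrightarrow> undist R v x y"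
  unfolding module_in_def by blast

lemma module_in_restrict: "module_in R W M \<Longrightarrow> W' \<subseteq> W \<Longrightarrow> module_in R W' (M \<inter> W')"
  unfolding module_in_def by blast

lemma subset_doubleton_eq: "M \<subseteq> {u, z} \<Longrightarrow> M \<noteq> {} \<Longrightarrow> M \<noteq> {u} \<Longrightarrow> M \<noteq> {z} \<Longrightarrow> M = {u, z}"
  by blast

lemma card_ge_mono: "card_ge n A \<Longrightarrow> A \<subseteq> B \<Longrightarrow> card_ge n B"
  unfolding card_ge_def by blast

lemma card_ge_2E:
  assumes "card_ge 2 A"
  obtains x y where "x \<in> A" "y \<in> A" "x \<noteq> y"
  using assms unfolding card_ge_def card_2_iff by blast

lemma card_ge_3_avoid:
  assumes "card_ge 3 W"
  obtains c where "c \<in> W" "c \<noteq> x" "c \<noteq> y"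
proof -
  obtain B where B: "B \<subseteq> W" "card B = 3" using assms unfolding card_ge_def by blast
  have "card {x, y} \<le> 2" by (cases "x = y") auto
  then have "\<not> B \<subseteq> {x, y}" using B(2) card_mono[of "{x, y}" B] by fastforce
  then show ?thesis using that B(1) by blast
qed

lemma prime_in_trivial_module:
  "prime_in R W \<Longrightarrow> module_in R W M \<Longrightarrow> M = {} \<or> M = W \<or> (\<exists>x. M = {x})"
  unfolding prime_in_def by simp

lemma prime_in_no_module:
  "prime_in R W \<Longrightarrow> module_in R W M \<Longrightarrow> x \<in> M \<Longrightarrow> y \<in> M \<Longrightarrow> x \<noteq> y \<Longrightarrow> v \<in> W \<Longrightarrow> v \<notin> M \<Longrightarrow> False"
  by (metis prime_in_trivial_module empty_iff singletonD)

lemma prime_inI: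
  assumes "card_ge 3 W"
    and "\<And>M. module_in R W M \<Longrightarrow> M \<noteq> {} \<Longrightarrow> M \<noteq> W \<Longrightarrow> \<forall>x. M \<noteq> {x} \<Longrightarrow> False"
  shows "prime_in R W"
  using assms unfolding prime_in_def by blast

lemma nonprime_insert_module:
  assumes Z: "prime_in R Z" and y: "y \<notin> Z" and np: "\<not> prime_in R (insert y Z)"
  shows "module_in R (insert y Z) Z \<or> (\<exists>g\<in>Z. module_in R (insert y Z) {g, y})"
proof -
  have "card_ge 3 Z" using Z unfolding prime_in_def by simp
  then have "card_ge 3 (insert y Z)" by (rule card_ge_mono) blast
  then obtain M where M: "module_in R (insert y Z) M"
    and nontriv: "M \<noteq> {}" "M \<noteq> insert y Z" "\<And>x. M \<noteq> {x}"
    using np unfolding prime_in_def by blast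
  have sub: "M \<subseteq> insert y Z" using M unfolding module_in_def by simp
  from prime_in_trivial_module[OF Z module_in_restrict[OF M subset_insertI]] show ?thesis
  proof (elim disjE exE)
    assume "M \<inter> Z = {}"
    then have "M \<subseteq> {y}" using sub by blast
    then show ?thesis using nontriv(1,3) by (meson subset_singletonD)
  next
    assume "M \<inter> Z = Z"
    then have "M = Z" using sub nontriv(2) by blast
    then show ?thesis using M by simp
  next
    fix g assume g: "M \<inter> Z = {g}"
    then have "M = {g, y}" using sub nontriv(3)[of g] by blast
    then show ?thesis using M g by blast
  qed
qed

section \<open>2-structures\<close>

definition class_order :: "'a set \<Rightarrow> ('a \<times> 'a) set \<Rightarrow> ('a \<times> 'a) set \<Rightarrow> ('a \<times> 'a) set" where
  "class_order W e f = {(x, y). x \<in> W \<and> y \<in> W \<and> x \<noteq> y \<and> (x, y) \<in> e \<and> (y, x) \<in> f}"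

lemma linear2_iff:
  "linear2 t \<longleftrightarrow> (\<exists>e\<in>Es t. \<exists>f\<in>Es t. e \<noteq> f \<and> strict_linear_order_on (Vs t) (class_order (Vs t) e f))"
  unfolding linear2_def class_order_def ..

lemma Vs_induced [simp]: "Vs (induced \<sigma> W) = W"
  by (simp add: induced_def Vs_def)

lemma Rel_induced [simp]: "Rel (induced \<sigma> W) = Rel \<sigma> \<inter> (dpairs W \<times> dpairs W)"
  by (simp add: induced_def Rel_def)

lemma module_induced_iff: "module (induced \<sigma> W) M \<longleftrightarrow> module_in (Rel \<sigma>) W M"
  unfolding module_def module_in_def undist_def by (auto simp: dpairs_def)

lemma prime_induced_iff: "prime2 (induced \<sigma> W) \<longleftrightarrow> prime_in (Rel \<sigma>) W"
  unfolding prime2_def prime_in_def module_induced_iff by simp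

lemma prime2_iff: "prime2 \<sigma> \<longleftrightarrow> prime_in (Rel \<sigma>) (Vs \<sigma>)"
  unfolding prime2_def prime_in_def module_def module_in_def undist_def by simp

locale two_structure =
  fixes \<sigma> :: "'a twostr"
  assumes is_2structure: "is_2structure \<sigma>"
begin

abbreviation "V \<equiv> Vs \<sigma>"
abbreviation "R \<equiv> Rel \<sigma>"

lemma R_equiv: "equiv (dpairs V) R"
  using is_2structure unfolding is_2structure_def .

lemma R_sym: "(p, q) \<in> R \<Longrightarrow> (q, p) \<in> R"
  using R_equiv unfolding equiv_def sym_def by blast

lemma R_trans: "(p, q) \<in> R \<Longrightarrow> (q, r) \<in> R \<Longrightarrow> (p, r) \<in> R"
  using R_equiv unfolding equiv_def trans_def by blast

lemma R_refl: "a \<in> V \<Longrightarrow> b \<in> V \<Longrightarrow> a \<noteq> b \<Longrightarrow> ((a, b), (a, b)) \<in> R"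
  using R_equiv unfolding equiv_def refl_on_def dpairs_def by blast

lemma undist_sym: "undist R z x y \<Longrightarrow> undist R z y x"
  unfolding undist_def using R_sym by blast

lemma undist_trans: "undist R z x y \<Longrightarrow> undist R z y w \<Longrightarrow> undist R z x w"
  unfolding undist_def using R_trans by blast

lemma undist_refl: "x \<in> V \<Longrightarrow> z \<in> V \<Longrightarrow> x \<noteq> z \<Longrightarrow> undist R z x x"
  unfolding undist_def using R_refl by auto

lemma undist_transfer:
  assumes "undist R w x y" "undist R w' x y" "undist R y w w'"
  shows "undist R x w w'"
proof -
  have "((w, x), (w, y)) \<in> R" "((x, w), (y, w)) \<in> R" "((w', x), (w', y)) \<in> R" "((x, w'), (y, w')) \<in> R"
    "((w, y), (w', y)) \<in> R" "((y, w), (y, w')) \<in> R"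
    using assms unfolding undist_def by auto
  then show ?thesis
    unfolding undist_def by (meson R_sym R_trans)
qed

lemma class_closed: "e \<in> Es \<sigma> \<Longrightarrow> p \<in> e \<Longrightarrow> (p, q) \<in> R \<Longrightarrow> q \<in> e"
  unfolding Es_def using R_equiv in_quotient_imp_closed by metis

lemma class_related: "e \<in> Es \<sigma> \<Longrightarrow> p \<in> e \<Longrightarrow> q \<in> e \<Longrightarrow> (p, q) \<in> R"
  unfolding Es_def using R_equiv quotient_eq_iff by metis

lemma class_disjoint: "e \<in> Es \<sigma> \<Longrightarrow> f \<in> Es \<sigma> \<Longrightarrow> p \<in> e \<Longrightarrow> p \<in> f \<Longrightarrow> e = f"
  unfolding Es_def using R_equiv quotient_disj by blast

lemma class_subset: "e \<in> Es \<sigma> \<Longrightarrow> e \<subseteq> dpairs V"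
  unfolding Es_def using R_equiv in_quotient_imp_subset by blast

lemma class_eq_Image: "e \<in> Es \<sigma> \<Longrightarrow> p \<in> e \<Longrightarrow> R `` {p} = e"
  using class_closed[of e p] class_related[of e p] by blast

lemma Es_induced: "Es (induced \<sigma> W) = (\<lambda>p. R `` {p} \<inter> dpairs W) ` dpairs W"
proof -
  have "(R \<inter> (dpairs W \<times> dpairs W)) `` {p} = R `` {p} \<inter> dpairs W" if "p \<in> dpairs W" for p
    using that by blast
  then show ?thesis unfolding Es_def quotient_def by (auto simp: image_def)
qed

lemma restr_class: "e \<in> Es \<sigma> \<Longrightarrow> restr e W = e \<inter> dpairs W"
  using class_subset[of e] unfolding restr_def dpairs_def by blast

lemma constant_induced:
  assumes "p \<in> W" "q \<in> W" "p \<noteq> q" and e: "e \<in> Es \<sigma>"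
    and all_e: "\<And>x y. x \<in> W \<Longrightarrow> y \<in> W \<Longrightarrow> x \<noteq> y \<Longrightarrow> (x, y) \<in> e"
  shows "constant2 (induced \<sigma> W) \<and> Es (induced \<sigma> W) = {restr e W}"
proof -
  have "dpairs W \<subseteq> e" using all_e unfolding dpairs_def by blast
  then have "R `` {p} \<inter> dpairs W = e \<inter> dpairs W" if "p \<in> dpairs W" for p
    using class_eq_Image[OF e] that by blast
  moreover have "(p, q) \<in> dpairs W" using assms unfolding dpairs_def by blast
  ultimately have "Es (induced \<sigma> W) = {e \<inter> dpairs W}" unfolding Es_induced by blast
  then show ?thesis using restr_class[OF e] unfolding constant2_def by simp
qed

lemma linear_induced:
  assumes pq: "p \<in> W" "q \<in> W" "p \<noteq> q" and e: "e \<in> Es \<sigma>" and f: "f \<in> Es \<sigma>" and "e \<noteq> f"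
    and e_or_f: "\<And>x y. x \<in> W \<Longrightarrow> y \<in> W \<Longrightarrow> x \<noteq> y \<Longrightarrow>
        (x, y) \<in> e \<and> (y, x) \<in> f \<or> (x, y) \<in> f \<and> (y, x) \<in> e"
    and trans: "trans (class_order W e f)"
  shows "linear2 (induced \<sigma> W) \<and> Es (induced \<sigma> W) = {restr e W, restr f W}"
proof -
  have disj: "x \<notin> e \<inter> f" for x using class_disjoint[OF e f] \<open>e \<noteq> f\<close> by blast
  have "R `` {x} \<inter> dpairs W \<in> {e \<inter> dpairs W, f \<inter> dpairs W}" if "x \<in> dpairs W" for x
  proof -
    have "x \<in> e \<or> x \<in> f" using that e_or_f unfolding dpairs_def by blast
    then show ?thesis using class_eq_Image[OF e, of x] class_eq_Image[OF f, of x] by blast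
  qed
  moreover have "(p, q) \<in> dpairs W" "(q, p) \<in> dpairs W" using pq unfolding dpairs_def by auto
  moreover have "(p, q) \<in> e \<and> (q, p) \<in> f \<or> (p, q) \<in> f \<and> (q, p) \<in> e" using e_or_f pq by blast
  ultimately have "Es (induced \<sigma> W) = {e \<inter> dpairs W, f \<inter> dpairs W}"
    unfolding Es_induced using class_eq_Image[OF e] class_eq_Image[OF f] by blast
  then have Es: "Es (induced \<sigma> W) = {restr e W, restr f W}" using restr_class[OF e] restr_class[OF f] by simp
  have "(p, q) \<in> restr e W \<or> (p, q) \<in> restr f W" using e_or_f pq unfolding restr_def by blast
  then have "restr e W \<noteq> restr f W" using disj unfolding restr_def by blast
  moreover have "class_order W (restr e W) (restr f W) = class_order W e f"
    unfolding class_order_def restr_def by blast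
  moreover have "strict_linear_order_on W (class_order W e f)"
    using trans e_or_f disj unfolding strict_linear_order_on_def irrefl_def total_on_def class_order_def by blast
  ultimately have "linear2 (induced \<sigma> W)" unfolding linear2_iff using Es by auto
  then show ?thesis using Es by blast
qed

end

section \<open>Witness systems\<close>

text \<open>The common core of the arguments for \<open>D = \<langle>X\<rangle>\<close> (\<open>flip = False\<close>, c any vertex of X)
  and \<open>D = X(\<alpha>)\<close> (\<open>flip = True\<close>, \<open>c = \<alpha>\<close>): Q is the set of remaining vertices outside X
  and S u is the set of witnesses of u. Assumption \<open>witness_cases\<close> is where (S3) enters.\<close>

locale witness_system = two_structure +
  fixes D Q :: "'a set" and S :: "'a \<Rightarrow> 'a set" and c :: 'a and flip :: bool
  assumes prime_V: "prime_in R V"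
    and D_sub: "D \<subseteq> V" and c_in: "c \<in> V" and c_notin: "c \<notin> D"
    and Q_sub: "Q \<subseteq> V" and Q_disj: "Q \<inter> D = {}"
    and S_nonempty: "u \<in> D \<Longrightarrow> S u \<noteq> {}"
    and outside_undist: "w \<in> V - (D \<union> Q) \<Longrightarrow> x \<in> D \<Longrightarrow> y \<in> D \<Longrightarrow> undist R c x y \<Longrightarrow> undist R w x y"
    and witness_cases: "u \<in> D \<Longrightarrow> y \<in> D \<Longrightarrow> y \<noteq> u \<Longrightarrow> z \<in> S u \<Longrightarrow>
        ((if flip then undist R u y c else undist R y u c) \<and> z \<notin> S y) \<or> (undist R c y u \<and> undist R z y u)"
    and witness_transfer: "u \<in> D \<Longrightarrow> y \<in> D \<Longrightarrow> z \<in> S u \<Longrightarrow> undist R z y u \<Longrightarrow> undist R c y u \<Longrightarrow> z \<in> S y"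
    and nonwitness_undist: "x \<in> D \<Longrightarrow> y \<in> D \<Longrightarrow> undist R c x y \<Longrightarrow> z \<in> Q \<Longrightarrow> z \<notin> S x \<Longrightarrow> z \<notin> S y \<Longrightarrow>
        undist R z x y"
begin

definition tied :: "'a \<Rightarrow> 'a \<Rightarrow> bool" where
  "tied y u \<longleftrightarrow> (if flip then undist R u y c else undist R y u c)"

lemma no_module_in_D:
  assumes "C \<subseteq> D" "x \<in> C" "y \<in> C" "x \<noteq> y"
    and c_undist: "\<And>x y. x \<in> C \<Longrightarrow> y \<in> C \<Longrightarrow> undist R c x y"
    and inner_undist: "\<And>x y v. x \<in> C \<Longrightarrow> y \<in> C \<Longrightarrow> v \<in> (Q \<union> D) - C \<Longrightarrow> undist R v x y"
  shows False
proof -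
  have "undist R v x y" if "x \<in> C" "y \<in> C" "v \<in> V - C" for x y v
  proof (cases "v \<in> Q \<union> D")
    case True
    then show ?thesis using inner_undist that by blast
  next
    case False
    then show ?thesis using outside_undist c_undist that \<open>C \<subseteq> D\<close> by blast
  qed
  then have "module_in R V C" using \<open>C \<subseteq> D\<close> D_sub unfolding module_in_def by blast
  then show False using prime_in_no_module[OF prime_V] assms(1-4) c_in c_notin by blast
qed

lemma undist_c_from_both:
  assumes "y \<in> D" "u \<in> D" "y \<noteq> u" "\<not> undist R c y u"
  shows "undist R y u c \<and> undist R u y c"
proof -
  obtain z where "z \<in> S u" using S_nonempty[OF assms(2)] by blast
  then have "tied y u" using witness_cases assms unfolding tied_def by blast
  moreover obtain z' where "z' \<in> S y" using S_nonempty[OF assms(1)] by blast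
  then have "tied u y" using witness_cases assms undist_sym unfolding tied_def by blast
  ultimately show ?thesis unfolding tied_def by (auto split: if_splits)
qed

lemma tied_if_witness_lost:
  assumes "y \<in> D" "u \<in> D" "y \<noteq> u" "z \<in> S u" "z \<notin> S y"
  shows "tied y u"
  using witness_cases[OF assms(2,1,3,4)] witness_transfer[OF assms(2,1,4)] assms(5)
  unfolding tied_def by blast

lemma tied_undist:
  assumes "undist R c x x'" and "tied d x \<and> tied d x' \<or> tied x d \<and> tied x' d"
  shows "undist R d x x'"
proof -
  have "undist R d x c \<and> undist R d x' c \<or> undist R x d c \<and> undist R x' d c"
    using assms(2) unfolding tied_def by (cases flip) auto
  then show ?thesis
    using undist_transfer[of x d c x'] assms(1) undist_trans undist_sym by blast
qed

lemma undist_if_c_distinguishes: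
  assumes "x \<in> D" "x' \<in> D" "d \<in> D" "d \<noteq> x" "d \<noteq> x'" "\<not> undist R c d x" "\<not> undist R c d x'"
  shows "undist R d x x'"
proof -
  have "undist R d x c" "undist R d x' c"
    using undist_c_from_both[of d x] undist_c_from_both[of d x'] assms by blast+
  then show ?thesis using undist_trans[OF _ undist_sym] by blast
qed

lemma undist_if_witnesses_differ:
  assumes "x \<in> D" "x' \<in> D" "d \<in> D" "undist R c x x'" "S x = S x'" "S d \<noteq> S x"
  shows "undist R d x x'"
proof -
  have "d \<noteq> x" "d \<noteq> x'" using assms by auto
  consider z where "z \<in> S x" "z \<notin> S d" | z where "z \<in> S d" "z \<notin> S x"
    using assms(6) by blast
  then show ?thesis
  proof cases
    case 1
    then have "tied d x \<and> tied d x'"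
      using tied_if_witness_lost assms \<open>d \<noteq> x\<close> \<open>d \<noteq> x'\<close> by metis
    then show ?thesis using tied_undist assms(4) by blast
  next
    case 2
    then have "tied x d \<and> tied x' d"
      using tied_if_witness_lost assms \<open>d \<noteq> x\<close> \<open>d \<noteq> x'\<close> by metis
    then show ?thesis using tied_undist assms(4) by blast
  qed
qed

lemma undist_if_same_witnesses:
  assumes "x \<in> D" "x' \<in> D" "undist R c x x'" "S x = S x'" "z \<in> Q"
  shows "undist R z x x'"
proof (cases "x = x'")
  case True
  then show ?thesis using undist_refl assms D_sub Q_sub Q_disj by blast
next
  case False
  show ?thesis
  proof (cases "z \<in> S x")
    case True
    then have "undist R z x' x" using witness_cases[OF assms(1,2) _ True] False assms(4) by auto
    then show ?thesis by (rule undist_sym)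
  next
    case False
    then show ?thesis using nonwitness_undist assms by simp
  qed
qed

lemma witnesses_differ:
  assumes y: "y \<in> D" and u: "u \<in> D" and "y \<noteq> u" "undist R c y u"
  shows "S y \<noteq> S u"
proof
  assume same: "S y = S u"
  define C where "C = {x \<in> D. undist R c x y \<and> S x = S y}"
  have "y \<in> C" unfolding C_def using y undist_refl D_sub c_in c_notin by blast
  moreover have "u \<in> C" unfolding C_def using u same \<open>undist R c y u\<close> undist_sym by blast
  moreover have c_undist: "undist R c x x'" if "x \<in> C" "x' \<in> C" for x x'
    using that undist_trans[OF _ undist_sym] unfolding C_def by blast
  moreover have "undist R v x x'" if xC: "x \<in> C" "x' \<in> C" and v: "v \<in> (Q \<union> D) - C" for x x' v
  proof -
    have x: "x \<in> D" "x' \<in> D" "S x = S x'" "S x = S y" using xC unfolding C_def by auto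
    consider "v \<in> Q" | "v \<in> D" "\<not> undist R c v y" | "v \<in> D" "S v \<noteq> S y"
      using v unfolding C_def by auto
    then show ?thesis
    proof cases
      case 1
      then show ?thesis using undist_if_same_witnesses x c_undist xC by blast
    next
      case 2
      have "undist R c x y" "undist R c x' y" using xC unfolding C_def by auto
      then have "\<not> undist R c v x" "\<not> undist R c v x'"
        using 2 undist_trans[of c v x y] undist_trans[of c v x' y] by blast+
      moreover have "v \<noteq> x" "v \<noteq> x'" using xC v by blast+
      ultimately show ?thesis using undist_if_c_distinguishes x(1,2) 2(1) by blast
    next
      case 3
      then show ?thesis using undist_if_witnesses_differ[OF x(1,2) 3(1) c_undist[OF xC] x(3)] x(4) by simp
    qed
  qed
  ultimately show False using no_module_in_D[of C y u] \<open>y \<noteq> u\<close> unfolding C_def by blast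
qed

lemma undist_c_one_way:
  assumes "y \<in> D" "u \<in> D" "y \<noteq> u"
  shows "undist R y u c \<or> undist R u y c"
proof (cases "undist R c y u")
  case False
  then show ?thesis using undist_c_from_both assms by blast
next
  case True
  then have "S y \<noteq> S u" using witnesses_differ assms by blast
  then have "tied y u \<or> tied u y" using tied_if_witness_lost assms by blast
  then show ?thesis unfolding tied_def by (auto split: if_splits)
qed

lemma witnesses_strict_mono:
  assumes "y \<in> D" "u \<in> D" "y \<noteq> u" "undist R c y u" "\<not> undist R u y c"
  shows "if flip then S u \<subset> S y else S y \<subset> S u"
proof -
  have "S y \<noteq> S u" using witnesses_differ assms by blast
  moreover have "z \<in> S y" if "flip" "z \<in> S u" for z
    using tied_if_witness_lost[of y u z] that assms unfolding tied_def by auto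
  moreover have "z \<in> S u" if "\<not> flip" "z \<in> S y" for z
    using tied_if_witness_lost[of u y z] that assms unfolding tied_def by auto
  ultimately show ?thesis by auto
qed

context
  fixes e f v
  assumes e: "e \<in> Es \<sigma>" and f: "f \<in> Es \<sigma>" and v: "v \<in> D" "(v, c) \<in> e" "(c, v) \<in> f"
begin

lemma classes_with_c:
  assumes u: "u \<in> D"
  shows "(u, c) \<in> e \<and> (c, u) \<in> f \<or> (u, c) \<in> f \<and> (c, u) \<in> e"
proof (cases "undist R c u v")
  case True
  then have "((v, c), (u, c)) \<in> R" "((c, v), (c, u)) \<in> R" unfolding undist_def using R_sym by blast+
  then show ?thesis using class_closed[OF e v(2)] class_closed[OF f v(3)] by blast
next
  case False
  then have "u \<noteq> v" using undist_refl u v(1) D_sub c_in c_notin by blast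
  then have uv: "undist R u v c" "undist R v u c" using undist_c_from_both u v(1) False by blast+
  have "((c, v), (u, c)) \<in> R"
    using R_trans[OF R_sym] uv unfolding undist_def by blast
  moreover have "((v, c), (c, u)) \<in> R"
    using R_trans[OF R_sym] uv unfolding undist_def by blast
  ultimately show ?thesis using class_closed[OF e v(2)] class_closed[OF f v(3)] by blast
qed

lemma classes_in_D:
  assumes "y \<in> D" "u \<in> D" "y \<noteq> u"
  shows "(y, u) \<in> e \<and> (u, y) \<in> f \<or> (y, u) \<in> f \<and> (u, y) \<in> e"
proof -
  have *: "(y, u) \<in> e \<and> (u, y) \<in> f \<or> (y, u) \<in> f \<and> (u, y) \<in> e"
    if "y \<in> D" "undist R y u c" for y u
  proof -
    have "((y, c), (y, u)) \<in> R" "((c, y), (u, y)) \<in> R" using that(2) R_sym unfolding undist_def by blast+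
    then show ?thesis using classes_with_c[OF that(1)] class_closed[OF e] class_closed[OF f] by blast
  qed
  show ?thesis using undist_c_one_way[OF assms] *[of y u] *[of u y] assms by blast
qed

context
  assumes "e \<noteq> f"
begin

lemma not_in_both: "p \<in> e \<Longrightarrow> p \<in> f \<Longrightarrow> False"
  using class_disjoint[OF e f] \<open>e \<noteq> f\<close> by blast

lemma class_order_across:
  assumes x: "x \<in> D" "(x, c) \<in> e" and y: "y \<in> D" "(y, c) \<notin> e"
  shows "(x, y) \<in> class_order D e f"
proof -
  have "x \<noteq> y" using x y by blast
  moreover have "\<not> undist R c x y"
    using class_closed[OF e x(2)] y(2) unfolding undist_def by blast
  ultimately have "undist R x y c" using undist_c_from_both x(1) y(1) by blast
  then have "((x, c), (x, y)) \<in> R" "((c, x), (y, x)) \<in> R" using R_sym unfolding undist_def by blast+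
  moreover have "(c, x) \<in> f" using classes_with_c[OF x(1)] x(2) not_in_both by blast
  ultimately show ?thesis
    using class_closed[OF e x(2)] class_closed[OF f] x y \<open>x \<noteq> y\<close> unfolding class_order_def by blast
qed

lemma class_order_side:
  assumes "(x, y) \<in> class_order D e f" "(y, c) \<in> e"
  shows "(x, c) \<in> e"
  using class_order_across[of y x] assms not_in_both unfolding class_order_def by blast

lemma undist_c_same_side:
  assumes "x \<in> D" "y \<in> D" "((x, c) \<in> e) = ((y, c) \<in> e)"
  shows "undist R c x y"
  using classes_with_c[OF assms(1)] classes_with_c[OF assms(2)] assms(3) not_in_both
    class_related[OF e] class_related[OF f]
  unfolding undist_def by blast

lemma witnesses_along_class_order:
  assumes xy: "(x, y) \<in> class_order D e f" and side: "((x, c) \<in> e) = ((y, c) \<in> e)"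
  shows "if ((x, c) \<in> e) = flip then S y \<subset> S x else S x \<subset> S y"
proof -
  have x: "x \<in> D" "y \<in> D" "x \<noteq> y" "(x, y) \<in> e" "(y, x) \<in> f"
    using xy unfolding class_order_def by auto
  have c: "undist R c x y" using undist_c_same_side[OF x(1,2) side] .
  show ?thesis
  proof (cases "(x, c) \<in> e")
    case True
    have "\<not> undist R y x c"
      using True side x(5) class_closed[OF e, of "(y, c)" "(y, x)"] R_sym not_in_both unfolding undist_def by blast
    then show ?thesis using witnesses_strict_mono[OF x(1,2,3) c] True by simp
  next
    case False
    then have "(x, c) \<in> f" using classes_with_c[OF x(1)] by blast
    then have "\<not> undist R x y c"
      using x(4) class_closed[OF f, of "(x, c)" "(x, y)"] R_sym not_in_both unfolding undist_def by blast
    then show ?thesis using witnesses_strict_mono[OF x(2,1) x(3)[symmetric] undist_sym[OF c]] False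
      by (cases flip) auto
  qed
qed

lemma trans_class_order: "trans (class_order D e f)"
proof (rule transI)
  fix p q r
  assume pq: "(p, q) \<in> class_order D e f" and qr: "(q, r) \<in> class_order D e f"
  show "(p, r) \<in> class_order D e f"
  proof (rule ccontr)
    assume "(p, r) \<notin> class_order D e f"
    moreover have "p \<noteq> r" using pq qr not_in_both unfolding class_order_def by blast
    ultimately have rp: "(r, p) \<in> class_order D e f"
      using classes_in_D[of p r] pq qr unfolding class_order_def by blast
    \<comment> \<open>the 3-cycle p, q, r stays on one side of c, where the witness sets grow strictly along it\<close>
    have "((p, c) \<in> e) = ((q, c) \<in> e)" "((q, c) \<in> e) = ((r, c) \<in> e)" "((r, c) \<in> e) = ((p, c) \<in> e)"
      using class_order_side pq qr rp by blast+
    then show False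
      using witnesses_along_class_order[OF pq] witnesses_along_class_order[OF qr]
        witnesses_along_class_order[OF rp]
      by (cases "((p, c) \<in> e) = flip") (auto dest: psubset_trans)
  qed
qed

end

end

lemma constant_if_class_twice:
  assumes e: "e \<in> Es \<sigma>" and two: "card_ge 2 {v \<in> D. (v, c) \<in> e \<and> (c, v) \<in> e}"
  shows "constant2 (induced \<sigma> D) \<and> Es (induced \<sigma> D) = {restr e D}"
proof -
  obtain v w where v: "v \<in> D" "(v, c) \<in> e" "(c, v) \<in> e" and "w \<in> D" "v \<noteq> w"
    using card_ge_2E[OF two] by blast
  then show ?thesis using constant_induced[OF _ _ _ e] classes_in_D[OF e e v] by metis
qed

lemma linear_if_class_pair_twice:
  assumes e: "e \<in> Es \<sigma>" and f: "f \<in> Es \<sigma>" and "e \<noteq> f"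
    and two: "card_ge 2 {v \<in> D. (v, c) \<in> e \<and> (c, v) \<in> f}"
  shows "linear2 (induced \<sigma> D) \<and> Es (induced \<sigma> D) = {restr e D, restr f D}"
proof -
  obtain v w where v: "v \<in> D" "(v, c) \<in> e" "(c, v) \<in> f" and "w \<in> D" "v \<noteq> w"
    using card_ge_2E[OF two] by blast
  then show ?thesis
    using linear_induced[OF _ _ _ e f \<open>e \<noteq> f\<close> classes_in_D[OF e f v] trans_class_order[OF e f v \<open>e \<noteq> f\<close>]]
    by blast
qed

end

section \<open>The two witness systems of a prime X under (S3)\<close>

locale S3 = two_structure +
  fixes X :: "'a set"
  assumes X_sub: "X \<subseteq> V" and prime_X: "prime_in R X" and prime_V: "prime_in R V"
    and no_prime_3_extension: "Y \<subseteq> V - X \<Longrightarrow> card Y = 3 \<Longrightarrow> \<not> prime_in R (X \<union> Y)"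
begin

lemma card_ge_3_X: "card_ge 3 X"
  using prime_X unfolding prime_in_def by blast

lemma mem_ext_set: "v \<in> ext_set \<sigma> X \<longleftrightarrow> v \<in> V - X \<and> (\<forall>x\<in>X. \<forall>y\<in>X. undist R v x y)"
proof -
  have "insert v X - X = {v}" if "v \<notin> X" for v using that by blast
  then show ?thesis unfolding ext_set_def module_induced_iff module_in_def by auto
qed

lemma mem_alpha_set:
  assumes a: "a \<in> X"
  shows "v \<in> alpha_set \<sigma> X a \<longleftrightarrow> v \<in> V - X \<and> (\<forall>w\<in>X - {a}. undist R w a v)"
proof (cases "v \<in> V - X")
  case True
  have "module_in R (X \<union> {v}) {a, v} \<longleftrightarrow> (\<forall>w\<in>X - {a}. undist R w a v)"
  proof
    assume m: "module_in R (X \<union> {v}) {a, v}"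
    show "\<forall>w\<in>X - {a}. undist R w a v"
    proof
      fix w assume "w \<in> X - {a}"
      then show "undist R w a v" by (intro module_inD[OF m]) (use True in auto)
    qed
  next
    assume av: "\<forall>w\<in>X - {a}. undist R w a v"
    have "undist R w x y" if "x \<in> {a, v}" "y \<in> {a, v}" "w \<in> X - {a}" for w x y
    proof -
      have wav: "undist R w a v" using av that(3) by blast
      moreover have "undist R w a a" "undist R w v v"
        using undist_refl[of a w] undist_refl[of v w] True that(3) a X_sub by auto
      ultimately show ?thesis using that(1,2) undist_sym[OF wav] by blast
    qed
    moreover have "X \<union> {v} - {a, v} \<subseteq> X - {a}" by blast
    ultimately show "module_in R (X \<union> {v}) {a, v}" using a unfolding module_in_def by blast
  qed
  then show ?thesis using True unfolding alpha_set_def module_induced_iff by simp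
qed (auto simp: alpha_set_def)

lemma ext_set_ef_eq:
  assumes b: "b \<in> X" and e: "e \<in> Es \<sigma>" and f: "f \<in> Es \<sigma>"
  shows "ext_set_ef \<sigma> X e f = {v \<in> ext_set \<sigma> X. (v, b) \<in> e \<and> (b, v) \<in> f}"
proof -
  have "(v, \<beta>) \<in> e \<and> (\<beta>, v) \<in> f"
    if "v \<in> ext_set \<sigma> X" "\<beta> \<in> X" "(v, b) \<in> e" "(b, v) \<in> f" for v \<beta>
  proof -
    have "undist R v b \<beta>" using that(1,2) b unfolding mem_ext_set by blast
    then show ?thesis using that(3,4) class_closed[OF e] class_closed[OF f] unfolding undist_def by blast
  qed
  then show ?thesis unfolding ext_set_ef_def using b by blast
qed

lemma ext_set_alpha_set_disjoint:
  assumes a: "a \<in> X"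
  shows "ext_set \<sigma> X \<inter> alpha_set \<sigma> X a = {}"
proof (rule ccontr)
  assume "ext_set \<sigma> X \<inter> alpha_set \<sigma> X a \<noteq> {}"
  then obtain y where y: "y \<in> ext_set \<sigma> X" "y \<in> alpha_set \<sigma> X a" by blast
  have "undist R a w w'" if "w \<in> X - {a}" "w' \<in> X - {a}" for w w'
    using undist_transfer[of w a y w'] that y a unfolding mem_ext_set mem_alpha_set[OF a] by blast
  then have "module_in R X (X - {a})" unfolding module_in_def by blast
  moreover obtain w where "w \<in> X" "w \<noteq> a" using card_ge_3_avoid[OF card_ge_3_X] by blast
  moreover obtain w' where "w' \<in> X" "w' \<noteq> a" "w' \<noteq> w" using card_ge_3_avoid[OF card_ge_3_X] by blast
  ultimately show False using prime_in_no_module[OF prime_X, of "X - {a}" w w' a] a by blast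
qed

lemma alpha_set_disjoint:
  assumes "a \<in> X" "x \<in> X" "a \<noteq> x"
  shows "alpha_set \<sigma> X a \<inter> alpha_set \<sigma> X x = {}"
proof (rule ccontr)
  assume "alpha_set \<sigma> X a \<inter> alpha_set \<sigma> X x \<noteq> {}"
  then obtain y where "y \<in> alpha_set \<sigma> X a" "y \<in> alpha_set \<sigma> X x" by blast
  then have y: "\<forall>w\<in>X - {a}. undist R w a y" "\<forall>w\<in>X - {x}. undist R w x y"
    unfolding mem_alpha_set[OF assms(1)] mem_alpha_set[OF assms(2)] by blast+
  have "undist R w u u'" if "u \<in> {a, x}" "u' \<in> {a, x}" "w \<in> X - {a, x}" for w u u'
  proof -
    have wax: "undist R w a x" using undist_trans[OF _ undist_sym] y that(3) by blast
    moreover have "undist R w a a" "undist R w x x"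
      using undist_refl[of a w] undist_refl[of x w] that(3) assms X_sub by auto
    ultimately show ?thesis using that(1,2) undist_sym[OF wax] by blast
  qed
  then have "module_in R X {a, x}" using assms unfolding module_in_def by blast
  moreover obtain w where "w \<in> X" "w \<noteq> a" "w \<noteq> x" using card_ge_3_avoid[OF card_ge_3_X] by blast
  ultimately show False using prime_in_no_module[OF prime_X, of "{a, x}" a x w] assms by blast
qed

lemma ext_set_closed:
  assumes y: "y \<in> ext_set \<sigma> X" and z: "z \<in> V - X" and zy: "\<forall>w\<in>X. undist R w z y"
  shows "z \<in> ext_set \<sigma> X"
proof -
  have "undist R z x x'" if "x \<in> X" "x' \<in> X" for x x'
    using undist_transfer[of x z y x'] zy y that unfolding mem_ext_set by blast
  then show ?thesis using z unfolding mem_ext_set by blast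
qed

lemma alpha_set_closed:
  assumes a: "a \<in> X" and y: "y \<in> alpha_set \<sigma> X a" and z: "z \<in> V - X"
    and zy: "\<forall>w\<in>X - {a}. undist R w z y"
  shows "z \<in> alpha_set \<sigma> X a"
proof -
  have "undist R w a z" if "w \<in> X - {a}" for w
    using undist_trans[OF _ undist_sym] zy y that unfolding mem_alpha_set[OF a] by blast
  then show ?thesis using z unfolding mem_alpha_set[OF a] by blast
qed

definition others :: "'a set \<Rightarrow> 'a set" where
  "others D = V - (X \<union> D)"

lemma two_point_extension_module_cases:
  assumes M: "module_in R (X \<union> {u, z}) M" and "u \<notin> X" "z \<notin> X"
    and nontriv: "M \<noteq> {}" "M \<noteq> X \<union> {u, z}" "\<forall>x. M \<noteq> {x}"
  obtains (pair) "M = {u, z}"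
    | (all) "X \<subseteq> M" "u \<notin> M \<or> z \<notin> M"
    | (one) x where "x \<in> X" "M \<inter> X = {x}" "u \<in> M \<or> z \<in> M"
proof -
  have sub: "M \<subseteq> X \<union> {u, z}" using M unfolding module_in_def by blast
  from prime_in_trivial_module[OF prime_X module_in_restrict[OF M Un_upper1]] show ?thesis
  proof (elim disjE exE)
    assume "M \<inter> X = {}"
    then have "M \<subseteq> {u, z}" using sub by blast
    then have "M = {u, z}"
      using subset_doubleton_eq nontriv(1) nontriv(3)[rule_format, of u] nontriv(3)[rule_format, of z] by blast
    then show ?thesis by (rule pair)
  next
    assume "M \<inter> X = X"
    then have "X \<subseteq> M" by blast
    moreover have "u \<notin> M \<or> z \<notin> M"
    proof (rule ccontr)
      assume "\<not> (u \<notin> M \<or> z \<notin> M)"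
      then have "M = X \<union> {u, z}" using sub \<open>X \<subseteq> M\<close> by blast
      then show False using nontriv(2) by blast
    qed
    ultimately show ?thesis by (rule all)
  next
    fix x assume x: "M \<inter> X = {x}"
    have "u \<in> M \<or> z \<in> M"
    proof (rule ccontr)
      assume "\<not> (u \<in> M \<or> z \<in> M)"
      then have "M = M \<inter> X" using sub by blast
      then show False using x nontriv(3)[rule_format, of x] by simp
    qed
    then show ?thesis using x by (intro one) blast+
  qed
qed

lemma third_vertex_module:
  assumes prime: "prime_in R (X \<union> {u, z})" and "u \<in> V - X" "z \<in> V - X" "y \<in> V - X" "y \<noteq> u" "y \<noteq> z" "u \<noteq> z"
  shows "module_in R (insert y (X \<union> {u, z})) (X \<union> {u, z})
    \<or> (\<exists>g\<in>X \<union> {u, z}. module_in R (insert y (X \<union> {u, z})) {g, y})"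
proof -
  have "\<not> prime_in R (X \<union> {u, z, y})" using no_prime_3_extension[of "{u, z, y}"] assms by auto
  moreover have "X \<union> {u, z, y} = insert y (X \<union> {u, z})" by blast
  ultimately show ?thesis using nonprime_insert_module[OF prime] assms by auto
qed

text \<open>In both instances below, the witnesses of u are exactly the z in \<open>others D\<close> for which
  \<open>X \<union> {u, z}\<close> is prime; only the direction proved in \<open>ext_prime\<close> and \<open>twin_prime\<close> is needed.\<close>

definition ext_witnesses :: "'a \<Rightarrow> 'a \<Rightarrow> 'a set" where
  "ext_witnesses b u = {z \<in> others (ext_set \<sigma> X). \<not> undist R u z b}"

lemma ext_module_meets_X_once:
  assumes b: "b \<in> X" and u: "u \<in> ext_set \<sigma> X" and z: "\<not> undist R u z b"
    and M: "module_in R (X \<union> {u, z}) M" and x: "x \<in> X" "M \<inter> X = {x}" and uz: "u \<in> M \<or> z \<in> M"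
  shows False
proof (cases "u \<in> M")
  case True
  then have "\<forall>w\<in>X - {x}. undist R w x u" using module_inD[OF M] x by blast
  then have "u \<in> alpha_set \<sigma> X x" using u unfolding mem_alpha_set[OF x(1)] mem_ext_set by blast
  then show False using u ext_set_alpha_set_disjoint[OF x(1)] by blast
next
  case False
  then have "undist R u x z" using module_inD[OF M, of x z u] x uz by blast
  moreover have "undist R u x b" using u x(1) b unfolding mem_ext_set by blast
  ultimately show False using undist_trans[OF undist_sym] z by blast
qed

lemma ext_prime:
  assumes b: "b \<in> X" and u: "u \<in> ext_set \<sigma> X" and z: "z \<in> ext_witnesses b u"
  shows "prime_in R (X \<union> {u, z})"
proof (rule prime_inI)
  have uX: "u \<in> V - X" using u unfolding mem_ext_set by blast
  have zX: "z \<in> V - X" "z \<notin> ext_set \<sigma> X" "\<not> undist R u z b"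
    using z unfolding ext_witnesses_def others_def by blast+
  have "u \<notin> X" "z \<notin> X" using uX zX by blast+
  show "card_ge 3 (X \<union> {u, z})" using card_ge_mono[OF card_ge_3_X] by blast
  fix M assume M: "module_in R (X \<union> {u, z}) M" and nontriv: "M \<noteq> {}" "M \<noteq> X \<union> {u, z}" "\<forall>x. M \<noteq> {x}"
  have out: "\<And>x y v. x \<in> M \<Longrightarrow> y \<in> M \<Longrightarrow> v \<in> X \<union> {u, z} \<Longrightarrow> v \<notin> M \<Longrightarrow> undist R v x y"
    using module_inD[OF M] by blast
  show False
    using M \<open>u \<notin> X\<close> \<open>z \<notin> X\<close> nontriv
  proof (cases rule: two_point_extension_module_cases)
    case pair
    then have "\<forall>w\<in>X. undist R w z u" using out[of z u] \<open>u \<notin> X\<close> \<open>z \<notin> X\<close> by blast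
    then show False using ext_set_closed[OF u zX(1)] zX(2) by blast
  next
    case all
    show False
    proof (cases "z \<in> M")
      case False
      then have "\<forall>x\<in>X. \<forall>y\<in>X. undist R z x y" using all out[of _ _ z] by blast
      then show False using zX unfolding mem_ext_set by blast
    next
      case True
      then show False using out[of z b u] all b zX(3) by blast
    qed
  next
    case (one x)
    then show False using ext_module_meets_X_once[OF b u zX(3) M] by blast
  qed
qed

lemma ext_witness_cases:
  assumes b: "b \<in> X" and u: "u \<in> ext_set \<sigma> X" and y: "y \<in> ext_set \<sigma> X" "y \<noteq> u"
    and z: "z \<in> ext_witnesses b u"
  shows "(undist R y u b \<and> z \<notin> ext_witnesses b y) \<or> (undist R b y u \<and> undist R z y u)"
proof -
  have zX: "z \<in> V - X" "z \<notin> ext_set \<sigma> X" using z unfolding ext_witnesses_def others_def by blast+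
  have uy: "u \<in> V - X" "y \<in> V - X" using u y unfolding mem_ext_set by blast+
  have "y \<noteq> z" "u \<noteq> z" using u y zX by blast+
  from third_vertex_module[OF ext_prime[OF b u z] uy(1) zX(1) uy(2) y(2) this]
  show ?thesis
  proof (elim disjE bexE)
    assume m: "module_in R (insert y (X \<union> {u, z})) (X \<union> {u, z})"
    have "undist R y u b" "undist R y z b"
      using module_inD[OF m, of u b y] module_inD[OF m, of z b y] b uy(2) \<open>y \<noteq> u\<close> \<open>y \<noteq> z\<close> by blast+
    then show ?thesis unfolding ext_witnesses_def by blast
  next
    fix g assume g: "g \<in> X \<union> {u, z}" and m: "module_in R (insert y (X \<union> {u, z})) {g, y}"
    have out: "undist R w g y" if "w \<in> X \<union> {u, z}" "w \<noteq> g" for w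
      using module_inD[OF m, of g y w] that uy(2) \<open>y \<noteq> u\<close> \<open>y \<noteq> z\<close> by blast
    consider "g \<in> X" | "g = u" | "g = z" using g by blast
    then show ?thesis
    proof cases
      case 1
      then have "y \<in> alpha_set \<sigma> X g" using out uy(2) unfolding mem_alpha_set[OF 1] by blast
      then show ?thesis using y(1) ext_set_alpha_set_disjoint[OF 1] by blast
    next
      case 2
      then have "undist R b u y" "undist R z u y" using out b zX(1) uy(1) \<open>u \<noteq> z\<close> by blast+
      then show ?thesis using undist_sym 2 by blast
    next
      case 3
      then have "\<forall>w\<in>X. undist R w z y" using out zX(1) by blast
      then show ?thesis using ext_set_closed[OF y(1) zX(1)] zX(2) by blast
    qed
  qed
qed

lemma ext_witness_transfer:
  assumes "z \<in> ext_witnesses b u" "undist R z y u" "undist R b y u"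
  shows "z \<in> ext_witnesses b y"
proof -
  have "\<not> undist R y z b"
    using undist_transfer[OF undist_sym[OF assms(2)] undist_sym[OF assms(3)]] assms(1)
    unfolding ext_witnesses_def by blast
  then show ?thesis using assms(1) unfolding ext_witnesses_def by blast
qed

lemma ext_nonwitness_undist:
  assumes "undist R b x y" "z \<in> others (ext_set \<sigma> X)" "z \<notin> ext_witnesses b x" "z \<notin> ext_witnesses b y"
  shows "undist R z x y"
  using undist_transfer[of x z b y] assms unfolding ext_witnesses_def by blast

lemma ext_outside_undist:
  assumes "w \<in> V - (ext_set \<sigma> X \<union> others (ext_set \<sigma> X))" "x \<in> ext_set \<sigma> X" "y \<in> ext_set \<sigma> X"
    and "b \<in> X" "undist R b x y"
  shows "undist R w x y"
proof -
  have "w \<in> X" using assms(1) unfolding others_def by blast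
  then show ?thesis using undist_transfer[of x w b y] assms unfolding mem_ext_set by blast
qed

lemma ext_witnesses_nonempty:
  assumes b: "b \<in> X" and u: "u \<in> ext_set \<sigma> X"
  shows "ext_witnesses b u \<noteq> {}"
proof
  assume no_witness: "ext_witnesses b u = {}"
  define C where "C = {c \<in> ext_set \<sigma> X. ext_witnesses b c = {}}"
  have tied: "undist R c m b" if c: "c \<in> C" and m: "m \<in> V - C" for c m
  proof -
    have c': "c \<in> ext_set \<sigma> X" "ext_witnesses b c = {}" using c unfolding C_def by blast+
    consider "m \<in> X" | "m \<in> ext_set \<sigma> X - C" | "m \<in> others (ext_set \<sigma> X)"
      using m unfolding others_def by blast
    then show ?thesis
    proof cases
      case 1
      then show ?thesis using c'(1) b unfolding mem_ext_set by blast
    next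
      case 2
      then obtain z where z: "z \<in> ext_witnesses b m" unfolding C_def by blast
      have "c \<noteq> m" using c 2 by blast
      then show ?thesis
        using ext_witness_cases[OF b _ c'(1) _ z] ext_witness_transfer[OF z] 2 c'(2) by blast
    next
      case 3
      then show ?thesis using c'(2) unfolding ext_witnesses_def by blast
    qed
  qed
  have "undist R c x y" if "x \<in> V - C" "y \<in> V - C" "c \<in> C" for c x y
    using undist_trans[OF tied undist_sym[OF tied]] that by blast
  then have "module_in R V (V - C)" unfolding module_in_def by blast
  moreover obtain x y where "x \<in> X" "y \<in> X" "x \<noteq> y"
    using card_ge_3_avoid[OF card_ge_3_X] by metis
  moreover have "X \<subseteq> V - C" using X_sub unfolding C_def mem_ext_set by blast
  moreover have "u \<in> C" "u \<in> V" using u no_witness unfolding C_def mem_ext_set by blast+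
  ultimately show False using prime_in_no_module[OF prime_V, of "V - C" x y u] by blast
qed

lemma witness_system_ext:
  assumes b: "b \<in> X"
  shows "witness_system \<sigma> (ext_set \<sigma> X) (others (ext_set \<sigma> X)) (ext_witnesses b) b False"
proof unfold_locales
  show "prime_in R V" by (rule prime_V)
  show "ext_set \<sigma> X \<subseteq> V" "b \<notin> ext_set \<sigma> X" using b mem_ext_set by blast+
  show "b \<in> V" using b X_sub by blast
  show "others (ext_set \<sigma> X) \<subseteq> V" "others (ext_set \<sigma> X) \<inter> ext_set \<sigma> X = {}"
    unfolding others_def by blast+
  show "ext_witnesses b u \<noteq> {}" if "u \<in> ext_set \<sigma> X" for u
    using ext_witnesses_nonempty[OF b that] .
  show "undist R w x y"
    if "w \<in> V - (ext_set \<sigma> X \<union> others (ext_set \<sigma> X))" "x \<in> ext_set \<sigma> X" "y \<in> ext_set \<sigma> X"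
      "undist R b x y" for w x y
    using ext_outside_undist[OF that(1-3) b that(4)] .
  show "((if False then undist R u y b else undist R y u b) \<and> z \<notin> ext_witnesses b y)
      \<or> (undist R b y u \<and> undist R z y u)"
    if "u \<in> ext_set \<sigma> X" "y \<in> ext_set \<sigma> X" "y \<noteq> u" "z \<in> ext_witnesses b u" for u y z
    using ext_witness_cases[OF b that] by simp
  show "z \<in> ext_witnesses b y"
    if "u \<in> ext_set \<sigma> X" "y \<in> ext_set \<sigma> X" "z \<in> ext_witnesses b u" "undist R z y u" "undist R b y u"
    for u y z
    using ext_witness_transfer[OF that(3-5)] .
  show "undist R z x y"
    if "x \<in> ext_set \<sigma> X" "y \<in> ext_set \<sigma> X" "undist R b x y" "z \<in> others (ext_set \<sigma> X)"
      "z \<notin> ext_witnesses b x" "z \<notin> ext_witnesses b y" for x y z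
    using ext_nonwitness_undist[OF that(3-6)] .
qed

definition twin_witnesses :: "'a \<Rightarrow> 'a \<Rightarrow> 'a set" where
  "twin_witnesses a u = {z \<in> others (alpha_set \<sigma> X a). \<not> undist R z u a}"

lemma twin_module_meets_X_once:
  assumes a: "a \<in> X" and u: "u \<in> alpha_set \<sigma> X a"
    and z: "z \<in> V - X" "z \<notin> alpha_set \<sigma> X a" "\<not> undist R z u a"
    and M: "module_in R (X \<union> {u, z}) M" and x: "x \<in> X" "M \<inter> X = {x}" and uz: "u \<in> M \<or> z \<in> M"
  shows False
proof -
  have uX: "u \<in> V - X" "\<And>w. w \<in> X - {a} \<Longrightarrow> undist R w a u" using u unfolding mem_alpha_set[OF a] by blast+
  have out: "\<And>y v. y \<in> M \<Longrightarrow> v \<in> X \<union> {u, z} \<Longrightarrow> v \<notin> M \<Longrightarrow> undist R v x y"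
    using module_inD[OF M] x by blast
  show False
  proof (cases "x = a")
    case True
    show False
    proof (cases "z \<in> M")
      case True
      have "undist R w z u" if "w \<in> X - {a}" for w
      proof -
        have "undist R w a z" using out[of z w] x \<open>x = a\<close> \<open>z \<in> M\<close> that by blast
        then show ?thesis using undist_trans[OF undist_sym uX(2)[OF that]] by blast
      qed
      then show False using alpha_set_closed[OF a u z(1)] z(2) by blast
    next
      case False
      then have "undist R z a u" using out[of u z] uz \<open>x = a\<close> by blast
      then show False using z(3) undist_sym[of z a u] by blast
    qed
  next
    case False
    show False
    proof (cases "u \<in> M")
      case True
      then have "\<forall>w\<in>X - {x}. undist R w x u" using out[of u] x by blast
      then have "u \<in> alpha_set \<sigma> X x" using uX(1) unfolding mem_alpha_set[OF x(1)] by blast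
      then show False using u alpha_set_disjoint[OF a x(1)] False by blast
    next
      case u_out: False
      have "a \<notin> M" using x a False by auto
      then have "undist R u z x" "undist R a z x"
        using out[of z] uz u_out a by (blast intro: undist_sym)+
      moreover have "undist R x u a" using undist_sym[OF uX(2)[of x]] x(1) False by blast
      ultimately show False using undist_transfer[of u z x a] z(3) by blast
    qed
  qed
qed

lemma twin_prime:
  assumes a: "a \<in> X" and u: "u \<in> alpha_set \<sigma> X a" and z: "z \<in> twin_witnesses a u"
  shows "prime_in R (X \<union> {u, z})"
proof (rule prime_inI)
  have uX: "u \<in> V - X" "\<And>w. w \<in> X - {a} \<Longrightarrow> undist R w a u" using u unfolding mem_alpha_set[OF a] by blast+
  have zX: "z \<in> V - X" "z \<notin> alpha_set \<sigma> X a" "\<not> undist R z u a"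
    using z unfolding twin_witnesses_def others_def by blast+
  have "u \<notin> X" "z \<notin> X" using uX zX by blast+
  show "card_ge 3 (X \<union> {u, z})" using card_ge_mono[OF card_ge_3_X] by blast
  fix M assume M: "module_in R (X \<union> {u, z}) M" and nontriv: "M \<noteq> {}" "M \<noteq> X \<union> {u, z}" "\<forall>x. M \<noteq> {x}"
  have out: "\<And>x y v. x \<in> M \<Longrightarrow> y \<in> M \<Longrightarrow> v \<in> X \<union> {u, z} \<Longrightarrow> v \<notin> M \<Longrightarrow> undist R v x y"
    using module_inD[OF M] by blast
  show False
    using M \<open>u \<notin> X\<close> \<open>z \<notin> X\<close> nontriv
  proof (cases rule: two_point_extension_module_cases)
    case pair
    then have "\<forall>w\<in>X - {a}. undist R w z u" using out[of z u] \<open>u \<notin> X\<close> \<open>z \<notin> X\<close> by blast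
    then show False using alpha_set_closed[OF a u zX(1)] zX(2) by blast
  next
    case all
    show False
    proof (cases "u \<in> M")
      case False
      then have "\<forall>x\<in>X. \<forall>y\<in>X. undist R u x y" using all out[of _ _ u] by blast
      then have "u \<in> ext_set \<sigma> X" using uX(1) unfolding mem_ext_set by blast
      then show False using u ext_set_alpha_set_disjoint[OF a] by blast
    next
      case True
      then have "undist R z a u" using out[of a u z] all a by blast
      then show False using zX(3) undist_sym[of z a u] by blast
    qed
  next
    case (one x)
    then show False using twin_module_meets_X_once[OF a u zX M] by blast
  qed
qed

lemma twin_witness_cases:
  assumes a: "a \<in> X" and u: "u \<in> alpha_set \<sigma> X a" and y: "y \<in> alpha_set \<sigma> X a" "y \<noteq> u"
    and z: "z \<in> twin_witnesses a u"
  shows "(undist R u y a \<and> z \<notin> twin_witnesses a y) \<or> (undist R a y u \<and> undist R z y u)"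
proof -
  have zX: "z \<in> V - X" "z \<notin> alpha_set \<sigma> X a" using z unfolding twin_witnesses_def others_def by blast+
  have uy: "u \<in> V - X" "y \<in> V - X" using u y unfolding mem_alpha_set[OF a] by blast+
  have "y \<noteq> z" "u \<noteq> z" using u y zX by blast+
  from third_vertex_module[OF twin_prime[OF a u z] uy(1) zX(1) uy(2) y(2) this]
  show ?thesis
  proof (elim disjE bexE)
    assume m: "module_in R (insert y (X \<union> {u, z})) (X \<union> {u, z})"
    have "undist R y x x'" if "x \<in> X" "x' \<in> X" for x x'
      using module_inD[OF m, of x x' y] that uy(2) \<open>y \<noteq> u\<close> \<open>y \<noteq> z\<close> by blast
    then have "y \<in> ext_set \<sigma> X" using uy(2) unfolding mem_ext_set by blast
    then show ?thesis using y(1) ext_set_alpha_set_disjoint[OF a] by blast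
  next
    fix g assume g: "g \<in> X \<union> {u, z}" and m: "module_in R (insert y (X \<union> {u, z})) {g, y}"
    have out: "undist R w g y" if "w \<in> X \<union> {u, z}" "w \<noteq> g" for w
      using module_inD[OF m, of g y w] that uy(2) \<open>y \<noteq> u\<close> \<open>y \<noteq> z\<close> by blast
    consider "g \<in> X" "g \<noteq> a" | "g = a" | "g = u" | "g = z" using g by blast
    then show ?thesis
    proof cases
      case 1
      then have "y \<in> alpha_set \<sigma> X g" using out uy(2) unfolding mem_alpha_set[OF 1(1)] by blast
      then show ?thesis using y(1) alpha_set_disjoint[OF a 1(1)] 1(2) by blast
    next
      case 2
      then have "undist R u a y" "undist R z a y" using out uy(1) zX(1) a by blast+
      then show ?thesis using undist_sym 2 unfolding twin_witnesses_def by blast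
    next
      case 3
      then have "undist R a u y" "undist R z u y" using out a uy(1) \<open>u \<noteq> z\<close> by blast+
      then show ?thesis using undist_sym 3 by blast
    next
      case 4
      then have "\<forall>w\<in>X - {a}. undist R w z y" using out zX(1) by blast
      then show ?thesis using alpha_set_closed[OF a y(1) zX(1)] zX(2) by blast
    qed
  qed
qed

lemma twin_witness_transfer:
  assumes "z \<in> twin_witnesses a u" "undist R z y u"
  shows "z \<in> twin_witnesses a y"
  using undist_trans[OF undist_sym[OF assms(2)]] assms(1) unfolding twin_witnesses_def by blast

lemma twin_nonwitness_undist:
  assumes "z \<in> others (alpha_set \<sigma> X a)" "z \<notin> twin_witnesses a x" "z \<notin> twin_witnesses a y"
  shows "undist R z x y"
  using undist_trans[OF _ undist_sym] assms unfolding twin_witnesses_def by blast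

lemma twin_outside_undist:
  assumes "w \<in> V - (alpha_set \<sigma> X a \<union> others (alpha_set \<sigma> X a))"
    and a: "a \<in> X" and "x \<in> alpha_set \<sigma> X a" "y \<in> alpha_set \<sigma> X a" "undist R a x y"
  shows "undist R w x y"
proof (cases "w = a")
  case False
  moreover have "w \<in> X" using assms(1) unfolding others_def by blast
  ultimately show ?thesis
    using undist_trans[OF undist_sym] assms(3,4) unfolding mem_alpha_set[OF a] by blast
qed (use assms in simp)

lemma twin_witnesses_nonempty:
  assumes a: "a \<in> X" and u: "u \<in> alpha_set \<sigma> X a"
  shows "twin_witnesses a u \<noteq> {}"
proof
  assume no_witness: "twin_witnesses a u = {}"
  define C where "C = {c \<in> alpha_set \<sigma> X a. twin_witnesses a c = {}}"
  have tied: "undist R m c a" if c: "c \<in> C" and m: "m \<in> V - C" "m \<noteq> a" for c m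
  proof -
    have c': "c \<in> alpha_set \<sigma> X a" "twin_witnesses a c = {}" using c unfolding C_def by blast+
    consider "m \<in> X" | "m \<in> alpha_set \<sigma> X a - C" | "m \<in> others (alpha_set \<sigma> X a)"
      using m unfolding others_def by blast
    then show ?thesis
    proof cases
      case 1
      then show ?thesis using c'(1) m(2) undist_sym unfolding mem_alpha_set[OF a] by blast
    next
      case 2
      then obtain z where z: "z \<in> twin_witnesses a m" unfolding C_def by blast
      have "c \<noteq> m" using c 2 by blast
      then show ?thesis
        using twin_witness_cases[OF a _ c'(1) _ z] twin_witness_transfer[OF z] 2 c'(2) by blast
    next
      case 3
      then show ?thesis using c'(2) unfolding twin_witnesses_def by blast
    qed
  qed
  have aV: "a \<in> V" using a X_sub by blast
  have tied_a: "undist R v x a" if "x \<in> C \<union> {a}" "v \<in> V - (C \<union> {a})" for x v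
    using tied[of x v] undist_refl[OF aV, of v] that by blast
  have "undist R v x y" if "x \<in> C \<union> {a}" "y \<in> C \<union> {a}" "v \<in> V - (C \<union> {a})" for x y v
    using undist_trans[OF tied_a undist_sym[OF tied_a]] that by blast
  moreover have "C \<subseteq> V" unfolding C_def mem_alpha_set[OF a] by blast
  ultimately have "module_in R V (C \<union> {a})" using aV unfolding module_in_def by blast
  moreover obtain w where "w \<in> X" "w \<noteq> a" using card_ge_3_avoid[OF card_ge_3_X] by blast
  moreover have "w \<notin> C" using \<open>w \<in> X\<close> unfolding C_def mem_alpha_set[OF a] by blast
  moreover have "u \<in> C" "u \<noteq> a" using u no_witness a unfolding C_def mem_alpha_set[OF a] by blast+
  ultimately show False using prime_in_no_module[OF prime_V, of "C \<union> {a}" u a w] X_sub by blast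
qed

lemma witness_system_twin:
  assumes a: "a \<in> X"
  shows "witness_system \<sigma> (alpha_set \<sigma> X a) (others (alpha_set \<sigma> X a)) (twin_witnesses a) a True"
proof unfold_locales
  show "prime_in R V" by (rule prime_V)
  show "alpha_set \<sigma> X a \<subseteq> V" "a \<notin> alpha_set \<sigma> X a" using a mem_alpha_set[OF a] by blast+
  show "a \<in> V" using a X_sub by blast
  show "others (alpha_set \<sigma> X a) \<subseteq> V" "others (alpha_set \<sigma> X a) \<inter> alpha_set \<sigma> X a = {}"
    unfolding others_def by blast+
  show "twin_witnesses a u \<noteq> {}" if "u \<in> alpha_set \<sigma> X a" for u
    using twin_witnesses_nonempty[OF a that] .
  show "undist R w x y"
    if "w \<in> V - (alpha_set \<sigma> X a \<union> others (alpha_set \<sigma> X a))" "x \<in> alpha_set \<sigma> X a"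
      "y \<in> alpha_set \<sigma> X a" "undist R a x y" for w x y
    using twin_outside_undist[OF that(1) a that(2-4)] .
  show "((if True then undist R u y a else undist R y u a) \<and> z \<notin> twin_witnesses a y)
      \<or> (undist R a y u \<and> undist R z y u)"
    if "u \<in> alpha_set \<sigma> X a" "y \<in> alpha_set \<sigma> X a" "y \<noteq> u" "z \<in> twin_witnesses a u" for u y z
    using twin_witness_cases[OF a that] by simp
  show "z \<in> twin_witnesses a y"
    if "u \<in> alpha_set \<sigma> X a" "y \<in> alpha_set \<sigma> X a" "z \<in> twin_witnesses a u" "undist R z y u"
      "undist R a y u" for u y z
    using twin_witness_transfer[OF that(3,4)] .
  show "undist R z x y"
    if "x \<in> alpha_set \<sigma> X a" "y \<in> alpha_set \<sigma> X a" "undist R a x y" "z \<in> others (alpha_set \<sigma> X a)"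
      "z \<notin> twin_witnesses a x" "z \<notin> twin_witnesses a y" for x y z
    using twin_nonwitness_undist[OF that(4-6)] .
qed

end

theorem lemma3p10:
  fixes \<sigma> :: "'a twostr" and X :: "'a set"
  assumes "is_2structure \<sigma>"
    and "X \<subset> Vs \<sigma>"
    and "prime2 (induced \<sigma> X)"
    and S3: "\<not> (\<exists>Y. Y \<subseteq> Vs \<sigma> - X \<and> card Y = 3 \<and> prime2 (induced \<sigma> (X \<union> Y)))"
    and "prime2 \<sigma>"
  shows "(\<forall>e\<in>Es \<sigma>.
            (card_ge 2 (ext_set_ef \<sigma> X e e) \<longrightarrow>
               constant2 (induced \<sigma> (ext_set \<sigma> X)) \<and>
               Es (induced \<sigma> (ext_set \<sigma> X)) = {restr e (ext_set \<sigma> X)}) \<and>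
            (\<forall>\<alpha>\<in>X. card_ge 2 (alpha_set_ef \<sigma> X \<alpha> e e) \<longrightarrow>
               constant2 (induced \<sigma> (alpha_set \<sigma> X \<alpha>)) \<and>
               Es (induced \<sigma> (alpha_set \<sigma> X \<alpha>)) = {restr e (alpha_set \<sigma> X \<alpha>)}))
       \<and> (\<forall>e\<in>Es \<sigma>. \<forall>f\<in>Es \<sigma>. e \<noteq> f \<longrightarrow>
            (card_ge 2 (ext_set_ef \<sigma> X e f) \<longrightarrow>
               linear2 (induced \<sigma> (ext_set \<sigma> X)) \<and>
               Es (induced \<sigma> (ext_set \<sigma> X)) = {restr e (ext_set \<sigma> X), restr f (ext_set \<sigma> X)}) \<and>
            (\<forall>\<alpha>\<in>X. card_ge 2 (alpha_set_ef \<sigma> X \<alpha> e f) \<longrightarrow>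
               linear2 (induced \<sigma> (alpha_set \<sigma> X \<alpha>)) \<and>
               Es (induced \<sigma> (alpha_set \<sigma> X \<alpha>)) = {restr e (alpha_set \<sigma> X \<alpha>), restr f (alpha_set \<sigma> X \<alpha>)}))"
proof -
  interpret S3 \<sigma> X
  proof unfold_locales
    show "is_2structure \<sigma>" by fact
    show "X \<subseteq> Vs \<sigma>" using assms(2) by blast
    show "prime_in (Rel \<sigma>) X" using assms(3) unfolding prime_induced_iff .
    show "prime_in (Rel \<sigma>) (Vs \<sigma>)" using assms(5) unfolding prime2_iff .
    show "\<not> prime_in (Rel \<sigma>) (X \<union> Y)" if "Y \<subseteq> Vs \<sigma> - X" "card Y = 3" for Y
      using S3 that unfolding prime_induced_iff by blast
  qed
  obtain b where b: "b \<in> X" using card_ge_3_avoid[OF card_ge_3_X] by blast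
  interpret ext: witness_system \<sigma> "ext_set \<sigma> X" "others (ext_set \<sigma> X)" "ext_witnesses b" b False
    by (rule witness_system_ext[OF b])
  show ?thesis
    using ext.constant_if_class_twice ext.linear_if_class_pair_twice
      witness_system.constant_if_class_twice[OF witness_system_twin]
      witness_system.linear_if_class_pair_twice[OF witness_system_twin]
    by (auto simp: ext_set_ef_eq[OF b] alpha_set_ef_def)
qed

end
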